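(* Let $\alpha\ge0$ and $n\ge2$ with $n\ge\alpha$, and let $K$ be the event that $\mathscr{G}(n,\alpha/n)$ is connected. Then \[ P_{n,\alpha}(K)\ge\frac1n\Bigl(1-\bigl(1-\tfrac{\alpha}{n}\bigr)^{n-1}\Bigr)^{n-1}. \]
   Context: $\mathscr{G}(n,p)$ is the random graph on vertex set $\{1,\dots,n\}$ in which each of the $\binom n2$ unordered pairs is an edge independently with probability $p$; here $p=\alpha/n$, and $P_{n,\alpha}$ is the corresponding probability measure. *)

theory Defs
  imports Complex_Main
begin

definition all_pairs :: "nat \<Rightarrow> nat set set" where
  "all_pairs n = {e. e \<subseteq> {1..n} \<and> card e = 2}"

definition edge_rel :: "nat set set \<Rightarrow> (nat \<times> nat) set" where
  "edge_rel E = {(u, v). {u, v} \<in> E}"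

definition graph_connected :: "nat \<Rightarrow> nat set set \<Rightarrow> bool" where
  "graph_connected n E \<longleftrightarrow> (\<forall>u\<in>{1..n}. \<forall>v\<in>{1..n}. (u, v) \<in> (edge_rel E)\<^sup>*)"

text \<open>Probability P_{n,p}(Q) in G(n,p): each of the binom(n,2) pairs is an edge
  independently with probability p, so an edge set E has probability
  p^|E| (1-p)^(binom(n,2)-|E|).\<close>
definition gnp_prob :: "nat \<Rightarrow> real \<Rightarrow> (nat set set \<Rightarrow> bool) \<Rightarrow> real" where
  "gnp_prob n p Q = (\<Sum>E\<in>{E. E \<subseteq> all_pairs n \<and> Q E}.
      p ^ card E * (1 - p) ^ (card (all_pairs n) - card E))"

end

theory Submission
  imports Defs
begin

(* Explore the random graph from vertex 1. Keep a set A of active vertices and a set U of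
   unexplored ones, where no pair meeting U has been exposed yet. Exposing the pairs between
   one active vertex a and U reveals a binomial neighbourhood J; then a retires, J becomes
   active, and the remaining unexposed pairs are independent of J. By induction on |A| + |U|,
   everything in U is reached from A with probability at least
   |A| / (|U| + |A|) * (1 - q^(|U| + |A| - 1))^|U|, where q = 1 - p; the induction step is an
   exact binomial expectation combined with Bernoulli's inequality 1 - q^N <= N p.
   The case A = {1}, U = {2..n} is the theorem. *)

(* For x + y = 1 this is the expectation of F J for a random subset J of U that contains each
   element independently with probability x. *)
definition bernoulli_sum :: "real \<Rightarrow> real \<Rightarrow> 'a set \<Rightarrow> ('a set \<Rightarrow> real) \<Rightarrow> real" where
  "bernoulli_sum x y U F = (\<Sum>J\<in>Pow U. x ^ card J * y ^ (card U - card J) * F J)"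

lemma bernoulli_sum_empty [simp]: "bernoulli_sum x y {} F = F {}"
  by (simp add: bernoulli_sum_def)

lemma bernoulli_sum_cong:
  assumes "\<And>J. J \<subseteq> U \<Longrightarrow> F J = G J"
  shows "bernoulli_sum x y U F = bernoulli_sum x y U G"
  unfolding bernoulli_sum_def using assms by (intro sum.cong) auto

lemma bernoulli_sum_mono:
  assumes "0 \<le> x" "0 \<le> y" "\<And>J. J \<subseteq> U \<Longrightarrow> F J \<le> G J"
  shows "bernoulli_sum x y U F \<le> bernoulli_sum x y U G"
  unfolding bernoulli_sum_def using assms by (intro sum_mono mult_left_mono) auto

lemma bernoulli_sum_nonneg:
  assumes "0 \<le> x" "0 \<le> y" "\<And>J. J \<subseteq> U \<Longrightarrow> 0 \<le> F J"
  shows "0 \<le> bernoulli_sum x y U F"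
  unfolding bernoulli_sum_def using assms by (intro sum_nonneg mult_nonneg_nonneg) auto

lemma bernoulli_sum_insert:
  assumes "finite U" "u \<notin> U"
  shows "bernoulli_sum x y (insert u U) F
           = x * bernoulli_sum x y U (\<lambda>J. F (insert u J)) + y * bernoulli_sum x y U F"
proof -
  let ?w = "\<lambda>J. x ^ card J * y ^ (card (insert u U) - card J) * F J"
  have inj: "inj_on (insert u) (Pow U)"
    using assms(2) by (intro inj_onI) (metis Diff_insert_absorb PowD subsetD)
  have "bernoulli_sum x y (insert u U) F = sum ?w (Pow U) + sum ?w (insert u ` Pow U)"
    unfolding bernoulli_sum_def Pow_insert using assms
    by (intro sum.union_disjoint) auto
  also have "sum ?w (Pow U) = y * bernoulli_sum x y U F"
    unfolding bernoulli_sum_def sum_distrib_left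
  proof (rule sum.cong)
    fix J assume "J \<in> Pow U"
    then have "card (insert u U) - card J = Suc (card U - card J)"
      using assms by (auto simp: Suc_diff_le card_mono)
    then show "?w J = y * (x ^ card J * y ^ (card U - card J) * F J)" by simp
  qed simp
  also have "sum ?w (insert u ` Pow U) = x * bernoulli_sum x y U (\<lambda>J. F (insert u J))"
    unfolding bernoulli_sum_def sum_distrib_left sum.reindex[OF inj] o_def
  proof (rule sum.cong)
    fix J assume "J \<in> Pow U"
    then have "finite J" "u \<notin> J"
      using assms by (auto intro: finite_subset)
    then have "card (insert u J) = Suc (card J)" by simp
    then show "?w (insert u J) = x * (x ^ card J * y ^ (card U - card J) * F (insert u J))"
      using assms by simp
  qed simp
  finally show ?thesis by simp
qed

lemma bernoulli_sum_const:
  "finite U \<Longrightarrow> bernoulli_sum x y U (\<lambda>_. c) = c * (x + y) ^ card U"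
  by (induction U rule: finite_induct) (simp_all add: bernoulli_sum_insert algebra_simps)

lemma bernoulli_sum_card:
  "finite U \<Longrightarrow> bernoulli_sum x y U (\<lambda>J. real (card J)) = real (card U) * x * (x + y) ^ (card U - 1)"
proof (induction U rule: finite_induct)
  case (insert u U)
  have "bernoulli_sum x y U (\<lambda>J. real (card (insert u J)))
          = bernoulli_sum x y U (\<lambda>J. real (card J) + 1)"
  proof (rule bernoulli_sum_cong)
    fix J assume "J \<subseteq> U"
    with insert have "finite J" "u \<notin> J" by (auto intro: finite_subset)
    then show "real (card (insert u J)) = real (card J) + 1" by simp
  qed
  also have "\<dots> = bernoulli_sum x y U (\<lambda>J. real (card J)) + (x + y) ^ card U"
    using bernoulli_sum_const[OF insert(1), of x y 1]
    by (simp add: bernoulli_sum_def sum.distrib algebra_simps)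
  finally show ?case
    using insert by (cases "card U") (simp_all add: bernoulli_sum_insert algebra_simps)
qed simp

lemma bernoulli_sum_affine_card:
  assumes "finite U"
  shows "bernoulli_sum x y U (\<lambda>J. c + real (card J))
           = c * (x + y) ^ card U + real (card U) * x * (x + y) ^ (card U - 1)"
proof -
  have "bernoulli_sum x y U (\<lambda>J. c + real (card J))
          = bernoulli_sum x y U (\<lambda>_. c) + bernoulli_sum x y U (\<lambda>J. real (card J))"
    unfolding bernoulli_sum_def by (simp add: sum.distrib algebra_simps)
  then show ?thesis
    using assms by (simp add: bernoulli_sum_const bernoulli_sum_card)
qed

lemma bernoulli_sum_scale:
  "bernoulli_sum x y U (\<lambda>J. c ^ (card U - card J) * F J) = bernoulli_sum x (y * c) U F"
  unfolding bernoulli_sum_def by (intro sum.cong) (simp_all add: power_mult_distrib)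

lemma bernoulli_sum_divide:
  "bernoulli_sum x y U (\<lambda>J. F J / c) = bernoulli_sum x y U F / c"
  unfolding bernoulli_sum_def by (simp add: sum_divide_distrib)

lemma bernoulli_sum_union:
  assumes "finite X" "finite Y" "X \<inter> Y = {}"
  shows "bernoulli_sum x y (X \<union> Y) F
           = bernoulli_sum x y X (\<lambda>J. bernoulli_sum x y Y (\<lambda>K. F (J \<union> K)))"
  using assms
proof (induction X arbitrary: F rule: finite_induct)
  case (insert u X)
  then have "bernoulli_sum x y (insert u X \<union> Y) F
      = x * bernoulli_sum x y X (\<lambda>J. bernoulli_sum x y Y (\<lambda>K. F (insert u (J \<union> K))))
        + y * bernoulli_sum x y X (\<lambda>J. bernoulli_sum x y Y (\<lambda>K. F (J \<union> K)))"
    by (simp add: bernoulli_sum_insert)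
  with insert show ?case by (simp add: bernoulli_sum_insert)
qed simp

lemma bernoulli_sum_restrict:
  assumes "finite X" "Y \<subseteq> X" "x + y = 1"
  shows "bernoulli_sum x y X (\<lambda>J. F (J \<inter> Y)) = bernoulli_sum x y Y F"
proof -
  have X: "X = Y \<union> (X - Y)" using assms by auto
  have "bernoulli_sum x y X (\<lambda>J. F (J \<inter> Y))
          = bernoulli_sum x y Y (\<lambda>J. bernoulli_sum x y (X - Y) (\<lambda>K. F ((J \<union> K) \<inter> Y)))"
    using assms by (subst X, subst bernoulli_sum_union) (auto intro: finite_subset)
  also have "\<dots> = bernoulli_sum x y Y (\<lambda>J. bernoulli_sum x y (X - Y) (\<lambda>_. F J))"
    by (intro bernoulli_sum_cong arg_cong[where f = F]) blast
  finally show ?thesis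
    using assms by (simp add: bernoulli_sum_const)
qed

lemma bernoulli_sum_image:
  "finite U \<Longrightarrow> inj_on f U \<Longrightarrow> bernoulli_sum x y (f ` U) G = bernoulli_sum x y U (\<lambda>J. G (f ` J))"
proof (induction U arbitrary: G rule: finite_induct)
  case (insert u U)
  then have "f u \<notin> f ` U" by auto
  with insert show ?case by (simp add: bernoulli_sum_insert)
qed simp

definition reach_bound :: "real \<Rightarrow> nat \<Rightarrow> nat \<Rightarrow> real" where
  "reach_bound q m a = real a / real (m + a) * (1 - q ^ (m + a - 1)) ^ m"

lemma bernoulli_sum_reach_bound:
  assumes "p + q = 1" "finite U" "card U = m" "1 \<le> m" "1 \<le> a"
  shows "bernoulli_sum p q U (\<lambda>J. reach_bound q (m - card J) (a - 1 + card J))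
           = (real (a - 1) * (1 - q ^ (m + a - 1)) ^ m
              + real m * p * (1 - q ^ (m + a - 1)) ^ (m - 1)) / real (m + a - 1)"
proof -
  define N where "N = m + a - 1"
  define r where "r = 1 - q ^ (N - 1)"
  have r: "p + q * r = 1 - q ^ N"
    using assms unfolding r_def N_def by (cases "m + a - 1") (simp_all add: algebra_simps)
  have "bernoulli_sum p q U (\<lambda>J. reach_bound q (m - card J) (a - 1 + card J))
          = bernoulli_sum p q U (\<lambda>J. r ^ (card U - card J) * ((real (a - 1) + real (card J)) / real N))"
  proof (rule bernoulli_sum_cong)
    fix J assume "J \<subseteq> U"
    then have "card J \<le> m" using assms card_mono by blast
    then have "m - card J + (a - 1 + card J) = N" using assms by (simp add: N_def)
    then show "reach_bound q (m - card J) (a - 1 + card J)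
                 = r ^ (card U - card J) * ((real (a - 1) + real (card J)) / real N)"
      using assms by (simp add: reach_bound_def r_def)
  qed
  also have "\<dots> = bernoulli_sum p (q * r) U (\<lambda>J. real (a - 1) + real (card J)) / real N"
    by (simp add: bernoulli_sum_scale bernoulli_sum_divide)
  finally show ?thesis
    using assms r by (simp add: bernoulli_sum_affine_card N_def)
qed

lemma reach_bound_recurrence_ineq:
  fixes m a :: nat and p s :: real
  assumes "1 \<le> m" "1 \<le> a" "0 \<le> p" "0 \<le> s" "s \<le> real (m + a - 1) * p"
  shows "real a * s ^ m / real (m + a)
           \<le> (real (a - 1) * s ^ m + real m * p * s ^ (m - 1)) / real (m + a - 1)"
proof -
  define N where "N = real (m + a - 1)"
  define t where "t = s ^ (m - 1)"
  have N: "real (m + a) = N + 1" "real (a - 1) = real a - 1" "N = real m + real a - 1" "N > 0"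
    using assms by (simp_all add: N_def of_nat_diff)
  have sm: "s ^ m = s * t"
    using assms unfolding t_def by (cases m) simp_all
  have "t * (real m * s) \<le> t * (real m * ((real m + real a) * p))"
    using assms N by (intro mult_left_mono) (simp_all add: t_def N_def mult_left_mono algebra_simps)
  \<comment> \<open>after clearing denominators, the right side minus the left side is t m ((m + a) p - s)\<close>
  then have "real a * (s * t) * (real m + real a - 1)
               \<le> ((real a - 1) * (s * t) + real m * p * t) * (real m + real a)"
    by (simp add: algebra_simps)
  then show ?thesis
    using N sm unfolding N(3)[symmetric] t_def[symmetric] by (simp add: divide_simps)
qed

lemma reach_bound_step:
  assumes "0 \<le> p" "0 \<le> q" "p + q = 1" "finite U" "card U = m" "1 \<le> m" "1 \<le> a"
  shows "reach_bound q m a \<le> bernoulli_sum p q U (\<lambda>J. reach_bound q (m - card J) (a - 1 + card J))"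
proof -
  define s where "s = 1 - q ^ (m + a - 1)"
  have "q = 1 - p" "p \<le> 1" using assms by simp_all
  then have "1 - real (m + a - 1) * p \<le> q ^ (m + a - 1)"
    using Bernoulli_inequality[of "-p" "m + a - 1"] by simp
  then have "s \<le> real (m + a - 1) * p" unfolding s_def by simp
  moreover have "0 \<le> s"
    using assms unfolding s_def by (simp add: power_le_one)
  ultimately have "real a * s ^ m / real (m + a)
      \<le> (real (a - 1) * s ^ m + real m * p * s ^ (m - 1)) / real (m + a - 1)"
    using assms by (intro reach_bound_recurrence_ineq) auto
  then show ?thesis
    unfolding bernoulli_sum_reach_bound[OF assms(3-7)] by (simp add: reach_bound_def s_def)
qed

definition touching_pairs :: "nat set \<Rightarrow> nat set \<Rightarrow> nat set set" where
  "touching_pairs A U = {e. e \<subseteq> A \<union> U \<and> card e = 2 \<and> e \<inter> U \<noteq> {}}"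

definition reaches_all :: "nat set \<Rightarrow> nat set \<Rightarrow> nat set set \<Rightarrow> bool" where
  "reaches_all A U E \<longleftrightarrow> (\<forall>u\<in>U. \<exists>b\<in>A. (b, u) \<in> (edge_rel E)\<^sup>*)"

lemma finite_touching_pairs: "finite A \<Longrightarrow> finite U \<Longrightarrow> finite (touching_pairs A U)"
  unfolding touching_pairs_def by (rule finite_subset[of _ "Pow (A \<union> U)"]) auto

lemma edge_rel_rtrancl_mono: "E \<subseteq> E' \<Longrightarrow> (edge_rel E)\<^sup>* \<subseteq> (edge_rel E')\<^sup>*"
  unfolding edge_rel_def by (intro rtrancl_mono) auto

lemma reaches_all_mono: "reaches_all A U E \<Longrightarrow> E \<subseteq> E' \<Longrightarrow> reaches_all A U E'"
  unfolding reaches_all_def using edge_rel_rtrancl_mono by blast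

lemma reaches_all_explore:
  assumes "a \<in> A" "reaches_all (A - {a} \<union> J) (U - J) E"
  shows "reaches_all A U ((\<lambda>u. {a, u}) ` J \<union> E)"
  unfolding reaches_all_def
proof
  fix u assume "u \<in> U"
  let ?E' = "(\<lambda>u. {a, u}) ` J \<union> E"
  have from_a: "(a, v) \<in> (edge_rel ?E')\<^sup>*" if "v \<in> J" for v
    using that unfolding edge_rel_def by auto
  show "\<exists>b\<in>A. (b, u) \<in> (edge_rel ?E')\<^sup>*"
  proof (cases "u \<in> J")
    case True
    with assms(1) from_a show ?thesis by blast
  next
    case False
    with \<open>u \<in> U\<close> assms(2) obtain b where "b \<in> A - {a} \<union> J" "(b, u) \<in> (edge_rel E)\<^sup>*"
      unfolding reaches_all_def by blast
    moreover have "(edge_rel E)\<^sup>* \<subseteq> (edge_rel ?E')\<^sup>*"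
      by (intro edge_rel_rtrancl_mono) blast
    ultimately show ?thesis
      using assms(1) from_a by (meson DiffD1 UnE rtrancl_trans subsetD)
  qed
qed

lemma touching_pairs_explore_subset:
  assumes "a \<in> A" "A \<inter> U = {}" "J \<subseteq> U"
  shows "touching_pairs (A - {a} \<union> J) (U - J) \<subseteq> touching_pairs A U - (\<lambda>u. {a, u}) ` U"
  using assms unfolding touching_pairs_def by auto

lemma bernoulli_sum_touching_pairs_explore:
  assumes "finite A" "finite U" "A \<inter> U = {}" "a \<in> A"
  shows "bernoulli_sum x y (touching_pairs A U) F
           = bernoulli_sum x y U (\<lambda>J. bernoulli_sum x y (touching_pairs A U - (\<lambda>u. {a, u}) ` U)
               (\<lambda>E. F ((\<lambda>u. {a, u}) ` J \<union> E)))"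
proof -
  let ?S = "(\<lambda>u. {a, u}) ` U"
  have "?S \<subseteq> touching_pairs A U"
    using assms unfolding touching_pairs_def by (auto simp: card_insert_if)
  then have "touching_pairs A U = ?S \<union> (touching_pairs A U - ?S)" by blast
  then have "bernoulli_sum x y (touching_pairs A U) F
               = bernoulli_sum x y ?S (\<lambda>J. bernoulli_sum x y (touching_pairs A U - ?S) (\<lambda>E. F (J \<union> E)))"
    using assms by (metis Diff_disjoint bernoulli_sum_union finite_Diff finite_imageI finite_touching_pairs)
  also have "\<dots> = bernoulli_sum x y U (\<lambda>J. bernoulli_sum x y (touching_pairs A U - ?S)
                    (\<lambda>E. F ((\<lambda>u. {a, u}) ` J \<union> E)))"
    using assms by (intro bernoulli_sum_image) (auto simp: inj_on_def doubleton_eq_iff)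
  finally show ?thesis .
qed

lemma reaches_all_prob_explore_le:
  assumes "0 \<le> x" "0 \<le> y" "x + y = 1" "finite A" "finite U" "A \<inter> U = {}" "a \<in> A" "J \<subseteq> U"
  defines "A' \<equiv> A - {a} \<union> J" and "U' \<equiv> U - J"
  shows "bernoulli_sum x y (touching_pairs A' U') (\<lambda>E. of_bool (reaches_all A' U' E))
           \<le> bernoulli_sum x y (touching_pairs A U - (\<lambda>u. {a, u}) ` U)
               (\<lambda>E. of_bool (reaches_all A U ((\<lambda>u. {a, u}) ` J \<union> E)))"
proof -
  let ?R = "touching_pairs A U - (\<lambda>u. {a, u}) ` U"
  have "bernoulli_sum x y (touching_pairs A' U') (\<lambda>E. of_bool (reaches_all A' U' E))
          = bernoulli_sum x y ?R (\<lambda>E. of_bool (reaches_all A' U' (E \<inter> touching_pairs A' U')))"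
    using assms touching_pairs_explore_subset[OF assms(7,6,8)]
    by (intro bernoulli_sum_restrict[symmetric]) (simp_all add: finite_touching_pairs)
  also have "\<dots> \<le> bernoulli_sum x y ?R (\<lambda>E. of_bool (reaches_all A U ((\<lambda>u. {a, u}) ` J \<union> E)))"
  proof (intro bernoulli_sum_mono assms(1,2))
    fix E
    have "reaches_all A U ((\<lambda>u. {a, u}) ` J \<union> E)"
      if "reaches_all A' U' (E \<inter> touching_pairs A' U')"
      using that reaches_all_explore[OF assms(7)] reaches_all_mono unfolding A'_def U'_def
      by (metis Un_mono inf_le1 subset_refl)
    then show "of_bool (reaches_all A' U' (E \<inter> touching_pairs A' U'))
                 \<le> (of_bool (reaches_all A U ((\<lambda>u. {a, u}) ` J \<union> E)) :: real)"
      by auto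
  qed
  finally show ?thesis .
qed

lemma card_explore:
  assumes "finite A" "finite U" "A \<inter> U = {}" "a \<in> A" "J \<subseteq> U"
  shows "card (A - {a} \<union> J) = card A - 1 + card J" "card (U - J) = card U - card J"
proof -
  have "finite J" using assms rev_finite_subset by blast
  then show "card (A - {a} \<union> J) = card A - 1 + card J"
    using assms by (subst card_Un_disjoint) auto
  show "card (U - J) = card U - card J"
    using \<open>finite J\<close> assms by (simp add: card_Diff_subset)
qed

lemma reach_bound_le_reaches_all_prob:
  assumes "0 \<le> p" "0 \<le> q" "p + q = 1"
  shows "finite A \<Longrightarrow> finite U \<Longrightarrow> A \<inter> U = {} \<Longrightarrow>
    reach_bound q (card U) (card A)
      \<le> bernoulli_sum p q (touching_pairs A U) (\<lambda>E. of_bool (reaches_all A U E))"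
proof (induction "card A + card U" arbitrary: A U rule: less_induct)
  case less
  consider "U = {}" | "A = {}" | a where "a \<in> A" "U \<noteq> {}" by blast
  then show ?case
  proof cases
    case 1
    then show ?thesis
      using less.prems assms by (simp add: reaches_all_def reach_bound_def bernoulli_sum_const
          finite_touching_pairs divide_le_eq_1)
  next
    case 2
    then show ?thesis
      using assms by (simp add: reach_bound_def bernoulli_sum_nonneg)
  next
    case (3 a)
    let ?R = "touching_pairs A U - (\<lambda>u. {a, u}) ` U"
    have card_A: "1 \<le> card A"
      using 3 less.prems by (auto simp: Suc_le_eq card_gt_0_iff)
    have IH: "reach_bound q (card U - card J) (card A - 1 + card J)
                \<le> bernoulli_sum p q ?R (\<lambda>E. of_bool (reaches_all A U ((\<lambda>u. {a, u}) ` J \<union> E)))"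
      if "J \<subseteq> U" for J
    proof -
      note card = card_explore[OF less.prems 3(1) that]
      have "finite J" using that less.prems rev_finite_subset by blast
      have "card J \<le> card U"
        using that less.prems by (simp add: card_mono)
      then have "card (A - {a} \<union> J) + card (U - J) < card A + card U"
        using card card_A by simp
      then have "reach_bound q (card (U - J)) (card (A - {a} \<union> J))
                   \<le> bernoulli_sum p q (touching_pairs (A - {a} \<union> J) (U - J))
                       (\<lambda>E. of_bool (reaches_all (A - {a} \<union> J) (U - J) E))"
        using less.prems \<open>finite J\<close> by (intro less.hyps) auto
      then have "reach_bound q (card U - card J) (card A - 1 + card J)
                   \<le> bernoulli_sum p q (touching_pairs (A - {a} \<union> J) (U - J))
                       (\<lambda>E. of_bool (reaches_all (A - {a} \<union> J) (U - J) E))"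
        unfolding card .
      also have "\<dots> \<le> bernoulli_sum p q ?R (\<lambda>E. of_bool (reaches_all A U ((\<lambda>u. {a, u}) ` J \<union> E)))"
        using that less.prems 3 assms by (intro reaches_all_prob_explore_le)
      finally show ?thesis .
    qed
    have "reach_bound q (card U) (card A)
            \<le> bernoulli_sum p q U (\<lambda>J. reach_bound q (card U - card J) (card A - 1 + card J))"
      using 3 less.prems card_A assms by (intro reach_bound_step) (auto simp: Suc_le_eq card_gt_0_iff)
    also have "\<dots> \<le> bernoulli_sum p q U (\<lambda>J. bernoulli_sum p q ?R
                       (\<lambda>E. of_bool (reaches_all A U ((\<lambda>u. {a, u}) ` J \<union> E))))"
      using IH assms by (intro bernoulli_sum_mono)
    also have "\<dots> = bernoulli_sum p q (touching_pairs A U) (\<lambda>E. of_bool (reaches_all A U E))"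
      using 3 less.prems by (intro bernoulli_sum_touching_pairs_explore[symmetric])
    finally show ?thesis .
  qed
qed

lemma gnp_prob_eq_bernoulli_sum:
  "gnp_prob n p Q = bernoulli_sum p (1 - p) (all_pairs n) (\<lambda>E. of_bool (Q E))"
proof -
  have "finite (Pow (all_pairs n))"
    unfolding all_pairs_def finite_Pow_iff by (rule finite_subset[of _ "Pow {1..n}"]) auto
  moreover have "{E. E \<subseteq> all_pairs n \<and> Q E} = {E \<in> Pow (all_pairs n). Q E}" by auto
  ultimately show ?thesis
    unfolding gnp_prob_def bernoulli_sum_def by (simp only: sum.inter_filter) (intro sum.cong; simp)
qed

lemma touching_pairs_eq_all_pairs:
  assumes "1 \<le> n"
  shows "touching_pairs {1} {2..n} = all_pairs n"
proof -
  have "e \<inter> {2..n} \<noteq> {}" if "e \<subseteq> {1..n}" "card e = 2" for e :: "nat set"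
  proof
    assume "e \<inter> {2..n} = {}"
    have "e \<subseteq> {1}"
    proof
      fix x assume "x \<in> e"
      with that(1) \<open>e \<inter> {2..n} = {}\<close> have "1 \<le> x" "x \<le> n" "x \<notin> {2..n}" by auto
      then show "x \<in> {1}" by simp
    qed
    then have "card e \<le> card {1::nat}" by (intro card_mono) simp_all
    with that(2) show False by simp
  qed
  moreover have "{1} \<union> {2..n} = {1..n}" using assms by auto
  ultimately show ?thesis
    unfolding touching_pairs_def all_pairs_def by auto
qed

lemma edge_rel_rtrancl_sym: "(x, y) \<in> (edge_rel E)\<^sup>* \<Longrightarrow> (y, x) \<in> (edge_rel E)\<^sup>*"
proof (induction rule: rtrancl_induct)
  case (step y z)
  then have "(z, y) \<in> edge_rel E" unfolding edge_rel_def by (simp add: insert_commute)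
  then show ?case using step.IH by (meson converse_rtrancl_into_rtrancl)
qed simp

lemma graph_connected_if_reaches_all:
  assumes "reaches_all {1} {2..n} E"
  shows "graph_connected n E"
proof -
  have "(1, u) \<in> (edge_rel E)\<^sup>*" if "u \<in> {1..n}" for u
    using assms that unfolding reaches_all_def by (cases "u = 1") auto
  then show ?thesis
    unfolding graph_connected_def by (meson edge_rel_rtrancl_sym rtrancl_trans)
qed

theorem lemma3p4:
  fixes \<alpha> :: real and n :: nat
  assumes "\<alpha> \<ge> 0" and "n \<ge> 2" and "real n \<ge> \<alpha>"
  shows "gnp_prob n (\<alpha> / real n) (graph_connected n)
           \<ge> (1 / real n) * (1 - (1 - \<alpha> / real n) ^ (n - 1)) ^ (n - 1)"
proof -
  define p where "p = \<alpha> / real n"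
  have p: "0 \<le> p" "p \<le> 1"
    using assms unfolding p_def by (simp_all add: divide_le_eq_1)
  have n: "1 \<le> n" using assms by simp
  have "(1 / real n) * (1 - (1 - p) ^ (n - 1)) ^ (n - 1)
          = reach_bound (1 - p) (card {2..n}) (card {1::nat})"
    using assms by (simp add: reach_bound_def)
  also have "\<dots> \<le> bernoulli_sum p (1 - p) (touching_pairs {1} {2..n})
                    (\<lambda>E. of_bool (reaches_all {1} {2..n} E))"
    using p by (intro reach_bound_le_reaches_all_prob) auto
  also have "\<dots> \<le> gnp_prob n p (graph_connected n)"
    unfolding gnp_prob_eq_bernoulli_sum touching_pairs_eq_all_pairs[OF n]
    using p graph_connected_if_reaches_all[of n] by (intro bernoulli_sum_mono) auto
  finally show ?thesis unfolding p_def .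
qed

end
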